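(* Let $n$ and $B$ be powers of $2$ with $2\le B\le n$. Let $\sigma$ be uniformly random among the odd integers in $[n]$ and $b$ independently uniformly random in $[n]$. Fix $f,f'\in[n]$ with $f\neq f'$ and consider $o_{f,\sigma,b}(f')$ as an element of $\{-n/2,\dots,n/2-1\}$. Then: (i) if $n/B$ does not divide $f-f'$, then $o_{f,\sigma,b}(f')$ is uniformly distributed on $\mathbb{Z}_n$; (ii) if $f-f'\equiv j\,(n/B)\pmod n$ with $j$ even, then $\Pr\{o_{f,\sigma,b}(f')=\ell\}=0$ for all integers $\ell\in[-n/B,n/B]$; (iii) if $f-f'\equiv j\,(n/B)\pmod n$ with $j$ odd, then $\Pr\{o_{f,\sigma,b}(f')=\ell\}=0$ for all integers $\ell\in[-\frac{n}{2B},\frac{n}{2B})$, and $\Pr\{o_{f,\sigma,b}(f')=\ell\}=\frac2n$ for all integers $\ell\in[-\frac nB,-\frac n{2B})\cup[\frac n{2B},\frac nB]$.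
   Context: For $\sigma,b\in[n]$: $\pi_{\sigma,b}(f)=\sigma(f-b)\bmod n$; $h_{\sigma,b}(f)=\mathrm{round}((B/n)\pi_{\sigma,b}(f))$ with $\mathrm{round}(y)=\lfloor y+1/2\rfloor$; and the offset $o_{f,\sigma,b}(f')=\pi_{\sigma,b}(f')-(n/B)h_{\sigma,b}(f)\bmod n$. Since $B$ is even, the parity of $j$ is well defined modulo $B$. *)

theory Defs
  imports "HOL-Probability.Probability" "HOL-Number_Theory.Cong"
begin

definition rnd :: "real \<Rightarrow> int" where
  "rnd y = \<lfloor>y + 1/2\<rfloor>"

definition perm_pi :: "int \<Rightarrow> int \<Rightarrow> int \<Rightarrow> int \<Rightarrow> int" where
  "perm_pi n \<sigma> b f = (\<sigma> * (f - b)) mod n"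

definition hash_h :: "int \<Rightarrow> int \<Rightarrow> int \<Rightarrow> int \<Rightarrow> int \<Rightarrow> int" where
  "hash_h n B \<sigma> b f = rnd ((real_of_int B / real_of_int n) * real_of_int (perm_pi n \<sigma> b f))"

definition offset :: "int \<Rightarrow> int \<Rightarrow> int \<Rightarrow> int \<Rightarrow> int \<Rightarrow> int \<Rightarrow> int" where
  "offset n B f \<sigma> b f' = (perm_pi n \<sigma> b f' - (n div B) * hash_h n B \<sigma> b f) mod n"

definition centered :: "int \<Rightarrow> int \<Rightarrow> int" where
  "centered n x = (x + n div 2) mod n - n div 2"

definition sb_pmf :: "int \<Rightarrow> (int \<times> int) pmf" where
  "sb_pmf n = pmf_of_set ({s \<in> {0..<n}. odd s} \<times> {0..<n})"

end

theory Submission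
  imports Defs
begin

text \<open>
  Write q = n/B and \<Delta> = f - f'. Because the hash rounds \<pi>(f)/q to the nearest integer,
  the offset is congruent modulo n to ((\<sigma>(f - b) + q/2) mod q) - q/2 - \<sigma>\<Delta>. For odd \<sigma>
  the map b \<mapsto> \<sigma>(f - b) mod n is a bijection, so the offset is l for exactly B values of b
  when (c + \<sigma>\<Delta>) mod n < q, where c = l + q/2, and for none otherwise. Everything thus
  reduces to counting the odd \<sigma> with (c + \<sigma>\<Delta>) mod n < q.

  If \<Delta> = jq (mod n), this condition says that B divides \<lfloor>c/q\<rfloor> + \<sigma>j, and parity decides:
  for even j it forces \<lfloor>c/q\<rfloor> = 0 and B | j, i.e. n | \<Delta>; for odd j no \<sigma> qualifies when
  \<lfloor>c/q\<rfloor> is even, and exactly one residue class of \<sigma> modulo B does when it is odd.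
  If q does not divide \<Delta>, write \<Delta> = 2^a w with w odd, so that 2^(a+1) divides q; for
  \<sigma> = 2k + 1 the value c + \<sigma>\<Delta> moves by multiples of 2^(a+1) w, which sweep the residues
  modulo n in one class mod 2^(a+1) evenly, giving exactly q/2 hits: the uniform distribution.
\<close>

lemma card_mod_periodic:
  fixes a :: int and b :: nat
  assumes a: "a > 0"
  shows "card {s \<in> {0..<a * int b}. P (s mod a)} = b * card {t \<in> {0..<a}. P t}"
proof -
  let ?T = "{t \<in> {0..<a}. P t}" and ?g = "\<lambda>(t, k). t + a * k"
  have "{s \<in> {0..<a * int b}. P (s mod a)} = ?g ` (?T \<times> {0..<int b})"
  proof (intro set_eqI iffI)
    fix s assume s: "s \<in> {s \<in> {0..<a * int b}. P (s mod a)}"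
    have "a * (s div a) \<le> s"
      using mult_div_mod_eq[of a s] pos_mod_sign[OF a, of s] by linarith
    then have "a * (s div a) < a * int b" using s by simp
    then have "s div a \<in> {0..<int b}"
      using s a by (simp add: pos_imp_zdiv_nonneg_iff)
    moreover have "s = ?g (s mod a, s div a)" by simp
    moreover have "s mod a \<in> ?T" using s a by simp
    ultimately show "s \<in> ?g ` (?T \<times> {0..<int b})" by blast
  next
    fix s assume "s \<in> ?g ` (?T \<times> {0..<int b})"
    then obtain t k where s: "s = t + a * k" "t \<in> ?T" "0 \<le> k" "k < int b" by auto
    have "s mod a = t" using s by simp
    moreover have "0 \<le> a * k" "a * k \<le> a * (int b - 1)" using s a by (simp_all add: mult_left_mono)
    ultimately show "s \<in> {s \<in> {0..<a * int b}. P (s mod a)}"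
      using s by (simp add: algebra_simps)
  qed
  moreover have "inj_on ?g (?T \<times> {0..<int b})"
  proof (rule inj_onI)
    fix x y assume "x \<in> ?T \<times> {0..<int b}" "y \<in> ?T \<times> {0..<int b}" and eq: "?g x = ?g y"
    then obtain t k t' k' where xy: "x = (t, k)" "y = (t', k')" "t \<in> ?T" "t' \<in> ?T" by auto
    have "t = (t + a * k) mod a" using xy by simp
    also have "\<dots> = (t' + a * k') mod a" using eq xy by simp
    also have "\<dots> = t'" using xy by simp
    finally have "t = t'" .
    with eq xy a show "x = y" by simp
  qed
  ultimately show ?thesis by (simp add: card_image card_cartesian_product)
qed

lemma bij_betw_affine_mod:
  fixes a w d :: int
  assumes "a > 0" "coprime w a"
  shows "bij_betw (\<lambda>s. (w * s + d) mod a) {0..<a} {0..<a}"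
proof -
  let ?\<phi> = "\<lambda>s. (w * s + d) mod a"
  have inj: "inj_on ?\<phi> {0..<a}"
  proof (rule inj_onI)
    fix s t assume st: "s \<in> {0..<a}" "t \<in> {0..<a}" "?\<phi> s = ?\<phi> t"
    then have "[w * s + d = w * t + d] (mod a)" by (simp add: cong_def)
    then have "[w * s = w * t] (mod a)" by (rule cong_add_rcancel[THEN iffD1])
    then have "[s = t] (mod a)" using assms(2) cong_mult_lcancel by blast
    then show "s = t" using st by (simp add: cong_def)
  qed
  have "?\<phi> ` {0..<a} = {0..<a}"
  proof (rule card_subset_eq)
    show "?\<phi> ` {0..<a} \<subseteq> {0..<a}" using assms(1) by auto
    show "card (?\<phi> ` {0..<a}) = card {0..<a}" by (rule card_image[OF inj])
    show "finite {0..<a}" by simp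
  qed
  with inj show ?thesis by (simp add: bij_betw_def)
qed

lemma card_affine_mod:
  fixes a w d :: int
  assumes "a > 0" "coprime w a"
  shows "card {s \<in> {0..<a}. P ((w * s + d) mod a)} = card {t \<in> {0..<a}. P t}"
proof -
  let ?\<phi> = "\<lambda>s. (w * s + d) mod a" and ?S = "{s \<in> {0..<a}. P ((w * s + d) mod a)}"
  have bij: "bij_betw ?\<phi> {0..<a} {0..<a}" by (rule bij_betw_affine_mod[OF assms])
  have "inj_on ?\<phi> ?S"
    by (rule inj_on_subset[OF bij_betw_imp_inj_on[OF bij]]) auto
  then have "card (?\<phi> ` ?S) = card ?S" by (rule card_image)
  moreover have "?\<phi> ` ?S = {t \<in> {0..<a}. P t}"
    using bij_betw_imp_surj_on[OF bij] by (auto simp del: atLeastLessThan_iff)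
  ultimately show ?thesis by simp
qed

lemma add_mult_mod_mult:
  fixes r g m t :: int
  assumes "0 \<le> r" "r < g" "0 < m"
  shows "(r + g * t) mod (g * m) = r + g * (t mod m)"
proof -
  have "(r + g * t) div g = t" "(r + g * t) mod g = r" using assms by simp_all
  then show ?thesis using zmod_zmult2_eq[of m "r + g * t" g] assms by simp
qed

lemma add_mult_less_mult_iff:
  fixes r g s Q :: int
  assumes "0 \<le> r" "r < g"
  shows "r + g * s < g * Q \<longleftrightarrow> s < Q"
proof
  assume "r + g * s < g * Q"
  then have "g * s < g * Q" using assms by linarith
  then show "s < Q" using assms by (simp add: mult_less_cancel_left)
next
  assume "s < Q"
  then have "g * s \<le> g * (Q - 1)" using assms by (intro mult_left_mono) auto
  then show "r + g * s < g * Q" using assms by (simp add: algebra_simps)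
qed

lemma odd_pow2_factorization:
  fixes x :: int
  assumes "x \<noteq> 0"
  obtains a w where "x = 2 ^ a * w" "odd w"
proof -
  have "\<not> is_unit (2 :: int)" by simp
  from multiplicity_decompose'[OF assms this] show ?thesis using that by blast
qed

lemma card_odds_below:
  fixes n :: int
  assumes "even n" "n \<ge> 0"
  shows "{s \<in> {0..<n}. odd s} = (\<lambda>k. 2 * k + 1) ` {0..<n div 2}"
    and "card {s \<in> {0..<n}. odd s} = nat (n div 2)"
proof -
  show img: "{s \<in> {0..<n}. odd s} = (\<lambda>k. 2 * k + 1) ` {0..<n div 2}"
  proof (intro set_eqI iffI)
    fix s assume s: "s \<in> {s \<in> {0..<n}. odd s}"
    then have "s = 2 * (s div 2) + 1" "s div 2 \<in> {0..<n div 2}" using assms by auto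
    then show "s \<in> (\<lambda>k. 2 * k + 1) ` {0..<n div 2}" by blast
  qed (use assms in auto)
  have "inj_on (\<lambda>k. 2 * k + 1) {0..<n div 2}" by (simp add: inj_on_def)
  then have "card ((\<lambda>k. 2 * k + 1) ` {0..<n div 2}) = nat (n div 2)" by (simp add: card_image)
  then show "card {s \<in> {0..<n}. odd s} = nat (n div 2)" unfolding img .
qed

definition odd_hits :: "int \<Rightarrow> int \<Rightarrow> int \<Rightarrow> int \<Rightarrow> nat" where
  "odd_hits n q c \<Delta> = card {\<sigma> \<in> {s \<in> {0..<n}. odd s}. (c + \<sigma> * \<Delta>) mod n < q}"

lemma odd_hits_coprime:
  fixes p M Q w c :: int
  assumes p: "0 < p" and M: "0 < M" and Q: "0 \<le> Q" "Q \<le> M" and cop: "coprime w M"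
  shows "odd_hits (2 * p * M) (2 * p * Q) c (p * w) = nat (p * Q)"
proof -
  define g where "g = 2 * p"
  define d where "d = (c + p * w) div g"
  define r where "r = (c + p * w) mod g"
  have r: "0 \<le> r" "r < g" using p by (simp_all add: r_def g_def)
  have hit_iff: "(c + (2 * k + 1) * (p * w)) mod (g * M) < g * Q \<longleftrightarrow> (w * (k mod M) + d) mod M < Q"
    for k
  proof -
    have "c + (2 * k + 1) * (p * w) = r + g * (d + w * k)"
      using div_mult_mod_eq[of "c + p * w" g] by (simp add: r_def d_def g_def algebra_simps)
    then have "(c + (2 * k + 1) * (p * w)) mod (g * M) = r + g * ((d + w * k) mod M)"
      using add_mult_mod_mult[OF r M] by simp
    moreover have "(d + w * k) mod M = (w * (k mod M) + d) mod M"
      by (metis add.commute mod_add_left_eq mod_mult_right_eq)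
    ultimately show ?thesis using add_mult_less_mult_iff[OF r] by simp
  qed
  have filter_image: "{x \<in> h ` K. P x} = h ` {k \<in> K. P (h k)}" for h :: "int \<Rightarrow> int" and K P
    by blast
  have half: "(g * M) div 2 = M * int (nat p)" using p by (simp add: g_def)
  have "even (g * M)" "0 \<le> g * M" using p M by (simp_all add: g_def)
  from card_odds_below(1)[OF this]
  have odds: "{s \<in> {0..<g * M}. odd s} = (\<lambda>k. 2 * k + 1) ` {0..<M * int (nat p)}"
    unfolding half .
  have "{\<sigma> \<in> {s \<in> {0..<g * M}. odd s}. (c + \<sigma> * (p * w)) mod (g * M) < g * Q}
      = (\<lambda>k. 2 * k + 1) ` {k \<in> {0..<M * int (nat p)}. (w * (k mod M) + d) mod M < Q}"
    unfolding odds filter_image hit_iff by (rule refl)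
  then have "odd_hits (g * M) (g * Q) c (p * w)
      = card {k \<in> {0..<M * int (nat p)}. (w * (k mod M) + d) mod M < Q}"
    by (simp add: odd_hits_def card_image inj_on_def)
  also have "\<dots> = nat p * card {t \<in> {0..<M}. (w * t + d) mod M < Q}"
    by (rule card_mod_periodic[OF M])
  also have "card {t \<in> {0..<M}. (w * t + d) mod M < Q} = card {t \<in> {0..<M}. t < Q}"
    by (rule card_affine_mod[OF M cop])
  also have "{t \<in> {0..<M}. t < Q} = {0..<Q}" using Q by auto
  finally show ?thesis using p Q by (simp add: g_def nat_mult_distrib)
qed

lemma mod_below_iff_dvd:
  fixes n B q j \<Delta> c \<sigma> :: int
  assumes n: "n = B * q" and B: "0 < B" and q: "0 < q" and \<Delta>: "[\<Delta> = j * q] (mod n)"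
  shows "(c + \<sigma> * \<Delta>) mod n < q \<longleftrightarrow> B dvd (c div q + \<sigma> * j)"
proof -
  have "[c + \<sigma> * \<Delta> = c + \<sigma> * (j * q)] (mod n)" by (intro cong_add cong_mult cong_refl \<Delta>)
  then have "(c + \<sigma> * \<Delta>) mod n = (c mod q + q * (c div q + \<sigma> * j)) mod (q * B)"
    using n div_mult_mod_eq[of c q] by (simp add: cong_def algebra_simps)
  also have "\<dots> = c mod q + q * ((c div q + \<sigma> * j) mod B)"
    using q B by (intro add_mult_mod_mult) simp_all
  finally have "(c + \<sigma> * \<Delta>) mod n < q \<longleftrightarrow> (c div q + \<sigma> * j) mod B < 1"
    using add_mult_less_mult_iff[of "c mod q" q _ 1] q by simp
  also have "\<dots> \<longleftrightarrow> (c div q + \<sigma> * j) mod B = 0"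
    using pos_mod_sign[OF B, of "c div q + \<sigma> * j"] by linarith
  also have "\<dots> \<longleftrightarrow> B dvd (c div q + \<sigma> * j)" by (simp add: dvd_eq_mod_eq_0)
  finally show ?thesis .
qed

lemma card_odd_dvd_affine:
  fixes B q j e :: int
  assumes B: "0 < B" "even B" and q: "0 \<le> q" and cop: "coprime j B" and e: "odd e"
  shows "card {\<sigma> \<in> {s \<in> {0..<B * q}. odd s}. B dvd (e + \<sigma> * j)} = nat q"
proof -
  have hit_odd: "B dvd (e + \<sigma> * j) \<Longrightarrow> odd \<sigma>" for \<sigma>
    using B(2) e dvd_trans[of 2 B] by fastforce
  have hit_iff: "B dvd (e + \<sigma> * j) \<longleftrightarrow> (j * (\<sigma> mod B) + e) mod B = 0" for \<sigma>
  proof -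
    have "(j * (\<sigma> mod B) + e) mod B = (e + \<sigma> * j) mod B"
      by (metis add.commute mult.commute mod_add_left_eq mod_mult_right_eq)
    then show ?thesis by (simp add: dvd_eq_mod_eq_0)
  qed
  have "{\<sigma> \<in> {s \<in> {0..<B * q}. odd s}. B dvd (e + \<sigma> * j)}
      = {\<sigma> \<in> {0..<B * int (nat q)}. (j * (\<sigma> mod B) + e) mod B = 0}"
  proof (intro set_eqI)
    fix \<sigma> show "\<sigma> \<in> {\<sigma> \<in> {s \<in> {0..<B * q}. odd s}. B dvd (e + \<sigma> * j)}
      \<longleftrightarrow> \<sigma> \<in> {\<sigma> \<in> {0..<B * int (nat q)}. (j * (\<sigma> mod B) + e) mod B = 0}"
      using hit_odd[of \<sigma>] hit_iff[of \<sigma>] q by auto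
  qed
  also have "card \<dots> = nat q * card {t \<in> {0..<B}. (j * t + e) mod B = 0}"
    by (rule card_mod_periodic[OF B(1)])
  also have "card {t \<in> {0..<B}. (j * t + e) mod B = 0} = card {t \<in> {0..<B}. t = 0}"
    by (rule card_affine_mod[OF B(1) cop])
  also have "{t \<in> {0..<B}. t = 0} = {0}" using B by auto
  finally show ?thesis by simp
qed

lemma rnd_divide_eq_div:
  fixes x q :: int
  assumes "0 < q" "even q \<or> q = 1"
  shows "rnd (real_of_int x / real_of_int q) = (x + q div 2) div q"
  using assms(2)
proof
  assume "even q"
  then have "real_of_int x / real_of_int q + 1 / 2 = real_of_int (x + q div 2) / real_of_int q"
    using assms(1) by (auto simp: field_simps elim!: evenE)
  then show ?thesis unfolding rnd_def by (simp only: floor_divide_of_int_eq)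
next
  assume "q = 1"
  then show ?thesis by (simp add: rnd_def floor_eq_iff)
qed

lemma centered_cong: "[centered n x = x] (mod n)"
  by (simp add: centered_def cong_def mod_diff_left_eq)

lemma centered_in_range:
  fixes n x :: int
  assumes "0 < n" "even n"
  shows "centered n x \<in> {-(n div 2)..<n div 2}"
  using assms pos_mod_bound[of n "x + n div 2"] pos_mod_sign[of n "x + n div 2"]
  by (auto simp: centered_def elim!: evenE)

lemma centered_cong_iff:
  fixes n x l :: int
  assumes "0 < n" "even n" "l \<in> {-(n div 2)..<n div 2}"
  shows "[centered n x = l] (mod n) \<longleftrightarrow> centered n x = l"
proof
  assume "[centered n x = l] (mod n)"
  then have "[centered n x + n div 2 = l + n div 2] (mod n)" by (simp add: cong_add_rcancel)
  moreover have "centered n x + n div 2 \<in> {0..<n}" "l + n div 2 \<in> {0..<n}"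
    using centered_in_range[OF assms(1,2), of x] assms by (auto elim!: evenE)
  ultimately show "centered n x = l" by (simp add: cong_def)
qed simp

lemma prob_sb_pmf:
  fixes n :: int and P :: "int \<Rightarrow> int \<Rightarrow> bool"
  assumes "0 < n" "even n"
  shows "measure_pmf.prob (sb_pmf n) {(\<sigma>, b). P \<sigma> b}
    = 2 * (\<Sum>\<sigma>\<in>{s \<in> {0..<n}. odd s}. real (card {b \<in> {0..<n}. P \<sigma> b})) / (real_of_int n)\<^sup>2"
proof -
  let ?S = "{s \<in> {0..<n}. odd s}" and ?T = "{0..<n}"
  have "1 \<in> ?S" "0 \<in> ?T" using assms by (auto elim!: evenE)
  then have "?S \<times> ?T \<noteq> {}" by blast
  moreover have fin: "finite ?S" by (rule finite_subset[of _ ?T]) auto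
  ultimately have prob: "measure_pmf.prob (sb_pmf n) {(\<sigma>, b). P \<sigma> b}
      = card ((?S \<times> ?T) \<inter> {(\<sigma>, b). P \<sigma> b}) / card (?S \<times> ?T)"
    unfolding sb_pmf_def by (intro measure_pmf_of_set) simp_all
  have "(?S \<times> ?T) \<inter> {(\<sigma>, b). P \<sigma> b} = Sigma ?S (\<lambda>\<sigma>. {b \<in> ?T. P \<sigma> b})" by auto
  moreover have "card (Sigma ?S (\<lambda>\<sigma>. {b \<in> ?T. P \<sigma> b})) = (\<Sum>\<sigma>\<in>?S. card {b \<in> ?T. P \<sigma> b})"
  proof (rule card_SigmaI[OF fin], rule ballI)
    fix \<sigma> show "finite {b \<in> ?T. P \<sigma> b}" by (rule finite_subset[of _ ?T]) auto
  qed
  ultimately have hits: "real (card ((?S \<times> ?T) \<inter> {(\<sigma>, b). P \<sigma> b}))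
      = (\<Sum>\<sigma>\<in>?S. real (card {b \<in> ?T. P \<sigma> b}))"
    by simp
  have total: "real (card (?S \<times> ?T)) = (real_of_int n)\<^sup>2 / 2"
    using card_odds_below(2)[of n] assms
    by (simp add: card_cartesian_product real_of_int_div power2_eq_square)
  show ?thesis unfolding prob hits total by simp
qed

locale pow2_hash =
  fixes n B q :: int
  assumes n_eq: "n = B * q"
    and B_pow2: "\<exists>k::nat. B = 2 ^ k" and q_pow2: "\<exists>k::nat. q = 2 ^ k"
    and B_ge_2: "2 \<le> B"
begin

lemma B_pos: "0 < B" and q_pos: "0 < q" and n_pos: "0 < n"
  using B_ge_2 q_pow2 n_eq by auto

lemma even_B: "even B"
proof -
  obtain k :: nat where k: "B = 2 ^ k" using B_pow2 by blast
  with B_ge_2 have "k \<noteq> 0" by (intro notI) simp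
  with k show ?thesis by simp
qed

lemma even_n: "even n"
  using even_B n_eq by simp

lemma n_div_B: "n div B = q"
  using n_eq B_pos by simp

lemma q_even_or_one: "even q \<or> q = 1"
  using q_pow2 by (auto simp: power_0_left)

lemma coprime_odd_n: "odd \<sigma> \<Longrightarrow> coprime \<sigma> n"
  and coprime_odd_B: "odd \<sigma> \<Longrightarrow> coprime \<sigma> B"
  using n_eq B_pow2 q_pow2 by (auto simp: power_add[symmetric])

lemma q_le_n: "q \<le> n"
  using n_eq B_ge_2 q_pos mult_right_mono[of 1 B q] by simp

lemma hash_h_eq: "hash_h n B \<sigma> b f = (perm_pi n \<sigma> b f + q div 2) div q"
proof -
  have "real_of_int B / real_of_int n * real_of_int (perm_pi n \<sigma> b f)
      = real_of_int (perm_pi n \<sigma> b f) / real_of_int q"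
    using n_eq B_pos by simp
  then show ?thesis
    by (simp add: hash_h_def rnd_divide_eq_div[OF q_pos q_even_or_one])
qed

lemma offset_cong:
  "[offset n B f \<sigma> b f' = (\<sigma> * (f - b) + q div 2) mod q - q div 2 - \<sigma> * (f - f')] (mod n)"
proof -
  define x where "x = \<sigma> * (f - b)"
  define h where "h = q div 2"
  have "q dvd n" using n_eq by simp
  then have "(x mod n + h) mod q = (x + h) mod q"
    by (simp add: mod_mod_cancel mod_add_left_eq[of "x mod n", symmetric]
                  mod_add_left_eq[of x, symmetric])
  then have "q * ((x mod n + h) div q) = x mod n + h - (x + h) mod q"
    by (metis minus_mult_div_eq_mod diff_diff_eq2 add_diff_cancel_left')
  then have "offset n B f \<sigma> b f' = (\<sigma> * (f' - b) mod n - (x mod n + h - (x + h) mod q)) mod n"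
    by (simp add: offset_def hash_h_eq n_div_B perm_pi_def x_def h_def)
  then have "[offset n B f \<sigma> b f' = \<sigma> * (f' - b) mod n - (x mod n + h - (x + h) mod q)] (mod n)"
    by (simp add: cong_def)
  also have "[\<sigma> * (f' - b) mod n - (x mod n + h - (x + h) mod q)
      = \<sigma> * (f' - b) - (x + h - (x + h) mod q)] (mod n)"
    by (intro cong_diff cong_add cong_refl) simp_all
  also have "\<sigma> * (f' - b) - (x + h - (x + h) mod q) = (x + h) mod q - h - \<sigma> * (f - f')"
    by (simp add: x_def algebra_simps)
  finally show ?thesis by (simp add: x_def h_def)
qed

lemma card_b_offset_cong:
  assumes "odd \<sigma>"
  shows "card {b \<in> {0..<n}. [centered n (offset n B f \<sigma> b f') = l] (mod n)}
    = (if (l + q div 2 + \<sigma> * (f - f')) mod n < q then nat B else 0)"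
proof -
  define h where "h = q div 2"
  define w where "w = (l + h + \<sigma> * (f - f')) mod n"
  have "q dvd n" using n_eq by simp
  have hit_iff: "[centered n (offset n B f \<sigma> b f') = l] (mod n)
      \<longleftrightarrow> ((- \<sigma>) * b + (\<sigma> * f + h)) mod n mod q = w" for b
  proof -
    define R where "R = (\<sigma> * (f - b) + h) mod q"
    have "0 \<le> R" "R < q" using q_pos by (simp_all add: R_def)
    then have R: "0 \<le> R" "R < n" using q_le_n by simp_all
    have "(- \<sigma>) * b + (\<sigma> * f + h) = \<sigma> * (f - b) + h" by (simp add: algebra_simps)
    then have R_eq: "((- \<sigma>) * b + (\<sigma> * f + h)) mod n mod q = R"
      by (simp only: R_def mod_mod_cancel[OF \<open>q dvd n\<close>])
    have "centered n (offset n B f \<sigma> b f') mod n = (R - h - \<sigma> * (f - f')) mod n"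
      using centered_cong offset_cong[of f \<sigma> b f'] by (simp add: cong_def R_def h_def)
    then have "[centered n (offset n B f \<sigma> b f') = l] (mod n) \<longleftrightarrow> [R - h - \<sigma> * (f - f') = l] (mod n)"
      by (simp add: cong_def)
    also have "\<dots> \<longleftrightarrow> [R = l + h + \<sigma> * (f - f')] (mod n)"
      by (simp add: cong_iff_dvd_diff algebra_simps)
    also have "\<dots> \<longleftrightarrow> R = w" using R by (simp add: cong_def w_def)
    finally show ?thesis by (simp only: R_eq)
  qed
  have "card {b \<in> {0..<n}. [centered n (offset n B f \<sigma> b f') = l] (mod n)}
      = card {b \<in> {0..<n}. ((- \<sigma>) * b + (\<sigma> * f + h)) mod n mod q = w}"
    by (simp only: hit_iff)
  also have "\<dots> = card {z \<in> {0..<n}. z mod q = w}"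
    using coprime_odd_n[OF assms] by (intro card_affine_mod n_pos) simp
  also have "\<dots> = nat B * card {s \<in> {0..<q}. s = w}"
    using card_mod_periodic[OF q_pos, of "nat B" "\<lambda>s. s = w"] n_eq B_pos by (simp add: mult.commute)
  also have "{s \<in> {0..<q}. s = w} = (if w < q then {w} else {})"
    using n_pos by (auto simp: w_def)
  finally show ?thesis by (simp add: w_def h_def)
qed

lemma prob_offset_cong:
  "measure_pmf.prob (sb_pmf n) {(\<sigma>, b). [centered n (offset n B f \<sigma> b f') = l] (mod n)}
     = 2 * real_of_int B * odd_hits n q (l + q div 2) (f - f') / (real_of_int n)\<^sup>2"
proof -
  let ?S = "{s \<in> {0..<n}. odd s}" and ?hit = "\<lambda>\<sigma>. (l + q div 2 + \<sigma> * (f - f')) mod n < q"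
  have "finite ?S" by (rule finite_subset[of _ "{0..<n}"]) auto
  have "(\<Sum>\<sigma>\<in>?S. card {b \<in> {0..<n}. [centered n (offset n B f \<sigma> b f') = l] (mod n)})
      = (\<Sum>\<sigma>\<in>?S. if ?hit \<sigma> then nat B else 0)"
  proof (rule sum.cong)
    fix \<sigma> assume "\<sigma> \<in> ?S"
    then show "card {b \<in> {0..<n}. [centered n (offset n B f \<sigma> b f') = l] (mod n)}
        = (if ?hit \<sigma> then nat B else 0)"
      by (intro card_b_offset_cong) simp
  qed simp
  also have "\<dots> = nat B * odd_hits n q (l + q div 2) (f - f')"
    using sum.inter_filter[OF \<open>finite ?S\<close>, of "\<lambda>_. nat B" ?hit]
    by (simp add: odd_hits_def mult.commute)
  finally have "(\<Sum>\<sigma>\<in>?S. real (card {b \<in> {0..<n}. [centered n (offset n B f \<sigma> b f') = l] (mod n)}))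
      = real_of_int B * odd_hits n q (l + q div 2) (f - f')"
    using B_pos by (simp flip: of_nat_sum)
  then show ?thesis using prob_sb_pmf[OF n_pos even_n] by simp
qed

lemma odd_hits_multiple_dvd:
  assumes "[\<Delta> = j * q] (mod n)"
  shows "odd_hits n q c \<Delta> = card {\<sigma> \<in> {s \<in> {0..<n}. odd s}. B dvd (c div q + \<sigma> * j)}"
  unfolding odd_hits_def by (simp only: mod_below_iff_dvd[OF n_eq B_pos q_pos assms])

lemma odd_hits_even_multiple:
  assumes \<Delta>: "[\<Delta> = j * q] (mod n)" and "even j" and "\<not> n dvd \<Delta>"
    and c: "-1 \<le> c div q" "c div q \<le> 1"
  shows "odd_hits n q c \<Delta> = 0"
proof -
  have "\<not> B dvd (c div q + \<sigma> * j)" if "odd \<sigma>" for \<sigma>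
  proof
    assume hit: "B dvd (c div q + \<sigma> * j)"
    then have "even (c div q)" using even_B \<open>even j\<close> dvd_trans[of 2 B] by fastforce
    moreover have "e = 0" if "-1 \<le> e" "e \<le> 1" "even e" for e :: int
      using that by presburger
    ultimately have "c div q = 0" using c by blast
    with hit have "B dvd j * \<sigma>" by (simp add: mult.commute)
    then have "B dvd j" using coprime_odd_B[OF that] by (simp add: coprime_commute coprime_dvd_mult_left_iff)
    then have "n dvd j * q" using n_eq by simp
    with \<Delta> \<open>\<not> n dvd \<Delta>\<close> show False by (simp add: cong_dvd_iff)
  qed
  then have "{\<sigma> \<in> {s \<in> {0..<n}. odd s}. B dvd (c div q + \<sigma> * j)} = {}" by blast
  then show ?thesis unfolding odd_hits_multiple_dvd[OF \<Delta>] by (simp only: card.empty)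
qed

lemma odd_hits_odd_multiple_even_div:
  assumes \<Delta>: "[\<Delta> = j * q] (mod n)" and "odd j" and "even (c div q)"
  shows "odd_hits n q c \<Delta> = 0"
proof -
  have "\<not> B dvd (c div q + \<sigma> * j)" if "odd \<sigma>" for \<sigma>
    using even_B \<open>odd j\<close> \<open>even (c div q)\<close> that dvd_trans[of 2 B] by fastforce
  then have "{\<sigma> \<in> {s \<in> {0..<n}. odd s}. B dvd (c div q + \<sigma> * j)} = {}" by blast
  then show ?thesis unfolding odd_hits_multiple_dvd[OF \<Delta>] by (simp only: card.empty)
qed

lemma odd_hits_odd_multiple_odd_div:
  assumes \<Delta>: "[\<Delta> = j * q] (mod n)" and "odd j" and "odd (c div q)"
  shows "odd_hits n q c \<Delta> = nat q"
  unfolding odd_hits_multiple_dvd[OF \<Delta>] unfolding n_eq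
  using q_pos by (intro card_odd_dvd_affine even_B B_pos coprime_odd_B assms) simp_all

lemma odd_hits_not_multiple:
  assumes "\<not> q dvd \<Delta>"
  shows "odd_hits n q c \<Delta> = nat (q div 2)"
proof -
  obtain kB kq :: nat where k: "B = 2 ^ kB" "q = 2 ^ kq" using B_pow2 q_pow2 by blast
  have "\<Delta> \<noteq> 0" using assms by auto
  then obtain a w where \<Delta>: "\<Delta> = 2 ^ a * w" "odd w" by (rule odd_pow2_factorization)
  have "a < kq"
  proof (rule ccontr)
    assume "\<not> a < kq"
    then have "q dvd 2 ^ a" using k by (simp add: le_imp_power_dvd)
    with assms \<Delta> show False by (meson dvd_mult2)
  qed
  define p :: int where "p = 2 ^ a"
  define Q :: int where "Q = 2 ^ (kq - a - 1)"
  define M :: int where "M = 2 ^ (kB + kq - a - 1)"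
  have "q = 2 * p * Q" "n = 2 * p * M"
    using \<open>a < kq\<close> k n_eq by (simp_all add: p_def Q_def M_def flip: power_Suc power_add)
  moreover have "Q \<le> M" unfolding Q_def M_def by (intro power_increasing) simp_all
  moreover have "coprime w M" using \<Delta>(2) by (simp add: M_def)
  ultimately have "odd_hits n q c \<Delta> = nat (p * Q)"
    using odd_hits_coprime[of p M Q w c] \<Delta>(1) by (simp add: p_def M_def Q_def)
  with \<open>q = 2 * p * Q\<close> show ?thesis by simp
qed

lemma real_n_div_B: "real_of_int n / real_of_int B = real_of_int q"
  and real_n_div_2B: "real_of_int n / (2 * real_of_int B) = real_of_int q / 2"
  using n_eq B_pos by simp_all

lemma prob_offset_not_multiple:
  assumes "\<not> q dvd (f - f')"
  shows "measure_pmf.prob (sb_pmf n) {(\<sigma>, b). [centered n (offset n B f \<sigma> b f') = l] (mod n)}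
    = 1 / real_of_int n"
proof -
  have "even q" using assms q_even_or_one by auto
  then have "real (nat (q div 2)) = real_of_int q / 2" using q_pos by (auto elim!: evenE)
  then show ?thesis
    unfolding prob_offset_cong odd_hits_not_multiple[OF assms] using n_eq B_pos q_pos
    by (simp add: power2_eq_square field_simps)
qed

lemma offset_uniform:
  assumes "\<not> q dvd (f - f')"
  shows "map_pmf (\<lambda>(\<sigma>, b). centered n (offset n B f \<sigma> b f')) (sb_pmf n)
    = pmf_of_set {-(n div 2)..<n div 2}"
proof (rule pmf_eqI)
  fix l
  let ?A = "{-(n div 2)..<n div 2}" and ?X = "\<lambda>(\<sigma>, b). centered n (offset n B f \<sigma> b f')"
  have A: "?A \<noteq> {}" "finite ?A" "card ?A = nat n" using n_pos even_n by auto
  show "pmf (map_pmf ?X (sb_pmf n)) l = pmf (pmf_of_set ?A) l"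
  proof (cases "l \<in> ?A")
    case True
    then have "?X -` {l} = {(\<sigma>, b). [centered n (offset n B f \<sigma> b f') = l] (mod n)}"
      using centered_cong_iff[OF n_pos even_n] by auto
    then show ?thesis
      using prob_offset_not_multiple[OF assms] True A n_pos by (simp add: pmf_map)
  next
    case False
    then have "?X -` {l} = {}" using centered_in_range[OF n_pos even_n] by auto
    then show ?thesis using False A by (simp add: pmf_map)
  qed
qed

lemma div_between_minus_one_one:
  fixes c :: int
  assumes "- q \<le> c" "c < 2 * q"
  shows "-1 \<le> c div q" "c div q \<le> 1"
proof -
  have "(- q) div q = -1" using q_pos by (intro int_div_pos_eq[where r = 0]) simp_all
  moreover have "(- q) div q \<le> c div q" using assms q_pos by (intro zdiv_mono1) simp_all
  ultimately show "-1 \<le> c div q" by simp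
  have "c div q \<le> (2 * q - 1) div q" using assms q_pos by (intro zdiv_mono1) simp_all
  also have "(2 * q - 1) div q = 1" using q_pos by (intro int_div_pos_eq[where r = "q - 1"]) simp_all
  finally show "c div q \<le> 1" .
qed

lemma prob_offset_even_multiple:
  assumes "\<not> n dvd (f - f')" "[f - f' = j * q] (mod n)" "even j" "- q \<le> l" "l \<le> q"
  shows "measure_pmf.prob (sb_pmf n) {(\<sigma>, b). [centered n (offset n B f \<sigma> b f') = l] (mod n)} = 0"
proof -
  have "- q \<le> l + q div 2" "l + q div 2 < 2 * q" using assms q_pos by linarith+
  then have "odd_hits n q (l + q div 2) (f - f') = 0"
    using assms div_between_minus_one_one by (intro odd_hits_even_multiple) auto
  then show ?thesis by (simp add: prob_offset_cong)
qed

lemma prob_offset_odd_multiple_near: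
  assumes "[f - f' = j * q] (mod n)" "odd j"
    and "- (real_of_int q / 2) \<le> real_of_int l" "real_of_int l < real_of_int q / 2"
  shows "measure_pmf.prob (sb_pmf n) {(\<sigma>, b). [centered n (offset n B f \<sigma> b f') = l] (mod n)} = 0"
proof -
  have "- q \<le> 2 * l" "2 * l < q" using assms(3,4) by linarith+
  then have "(l + q div 2) div q = 0" by (intro div_pos_pos_trivial) linarith+
  then have "odd_hits n q (l + q div 2) (f - f') = 0"
    using assms(1,2) by (intro odd_hits_odd_multiple_even_div) auto
  then show ?thesis by (simp add: prob_offset_cong)
qed

lemma prob_offset_odd_multiple_far:
  assumes "[f - f' = j * q] (mod n)" "odd j"
    and "- real_of_int q \<le> real_of_int l \<and> real_of_int l < - (real_of_int q / 2)
      \<or> real_of_int q / 2 \<le> real_of_int l \<and> real_of_int l \<le> real_of_int q"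
  shows "measure_pmf.prob (sb_pmf n) {(\<sigma>, b). [centered n (offset n B f \<sigma> b f') = l] (mod n)}
    = 2 / real_of_int n"
proof -
  have "- q \<le> l \<and> 2 * l < - q \<or> q \<le> 2 * l \<and> l \<le> q" using assms(3) by linarith
  then have "(l + q div 2) div q = -1 \<or> (l + q div 2) div q = 1"
  proof (elim disjE conjE)
    assume "- q \<le> l" "2 * l < - q"
    then show ?thesis
      by (intro disjI1 int_div_pos_eq[where r = "l + q div 2 + q"]) (use q_pos in presburger)+
  next
    assume "q \<le> 2 * l" "l \<le> q"
    then show ?thesis
      by (intro disjI2 int_div_pos_eq[where r = "l + q div 2 - q"]) (use q_pos in presburger)+
  qed
  then have "odd_hits n q (l + q div 2) (f - f') = nat q"
    using assms(1,2) by (intro odd_hits_odd_multiple_odd_div) auto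
  then show ?thesis unfolding prob_offset_cong using n_eq q_pos n_pos by (simp add: power2_eq_square)
qed

end

theorem lemma5p5:
  fixes n B f f' :: int
  assumes "\<exists>k::nat. n = 2 ^ k" and "\<exists>k::nat. B = 2 ^ k"
    and "2 \<le> B" and "B \<le> n"
    and "f \<in> {0..<n}" and "f' \<in> {0..<n}" and "f \<noteq> f'"
  shows
    "(\<not> (n div B) dvd (f - f') \<longrightarrow>
        map_pmf (\<lambda>(\<sigma>, b). centered n (offset n B f \<sigma> b f')) (sb_pmf n)
          = pmf_of_set {-(n div 2)..<n div 2})
   \<and> (\<forall>j::int. [f - f' = j * (n div B)] (mod n) \<and> even j \<longrightarrow>
        (\<forall>l::int. - (n div B) \<le> l \<and> l \<le> n div B \<longrightarrow>
           measure_pmf.prob (sb_pmf n)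
             {(\<sigma>, b). [centered n (offset n B f \<sigma> b f') = l] (mod n)} = 0))
   \<and> (\<forall>j::int. [f - f' = j * (n div B)] (mod n) \<and> odd j \<longrightarrow>
        (\<forall>l::int. - (real_of_int n / (2 * real_of_int B)) \<le> real_of_int l
                    \<and> real_of_int l < real_of_int n / (2 * real_of_int B) \<longrightarrow>
           measure_pmf.prob (sb_pmf n)
             {(\<sigma>, b). [centered n (offset n B f \<sigma> b f') = l] (mod n)} = 0)
      \<and> (\<forall>l::int. (- (real_of_int n / real_of_int B) \<le> real_of_int l
                       \<and> real_of_int l < - (real_of_int n / (2 * real_of_int B)))
                  \<or> (real_of_int n / (2 * real_of_int B) \<le> real_of_int l
                       \<and> real_of_int l \<le> real_of_int n / real_of_int B) \<longrightarrow>
           measure_pmf.prob (sb_pmf n)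
             {(\<sigma>, b). [centered n (offset n B f \<sigma> b f') = l] (mod n)} = 2 / real_of_int n))"
proof -
  obtain kn kB :: nat where k: "n = 2 ^ kn" "B = 2 ^ kB" using assms(1,2) by blast
  with assms(4) have "kB \<le> kn" by simp
  with k have n_eq: "n = B * 2 ^ (kn - kB)" by (simp flip: power_add)
  with assms(3) have "n div B = 2 ^ (kn - kB)" by simp
  with n_eq assms(2,3) interpret pow2_hash n B "n div B" by unfold_locales auto
  have not_dvd: "\<not> n dvd (f - f')"
  proof
    assume "n dvd (f - f')"
    then have "\<bar>n\<bar> \<le> \<bar>f - f'\<bar>" using assms(7) by (intro dvd_imp_le_int) simp_all
    with assms(5,6) show False by auto
  qed
  show ?thesis
    unfolding real_n_div_B real_n_div_2B
    using offset_uniform prob_offset_even_multiple[OF not_dvd]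
      prob_offset_odd_multiple_near prob_offset_odd_multiple_far
    by blast
qed

end
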